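(* Let $A\in\mathbb{C}^{m\times n}$ and $B\in\mathbb{C}^{n\times p}$. For any $A^{(1)}\in\{A^{(1)}\}$ and $B^{(1)}\in\{B^{(1)}\}$, put $P=I_n-A^{(1)}A$ and $Q=I_n-BB^{(1)}$. Then for every $\{1\}$-generalized inverse $(QP)^{(1)}$ of $QP$, the matrix $$X=B^{(1)}A^{(1)}-B^{(1)}P(QP)^{(1)}QA^{(1)}$$ satisfies $ABXAB=AB$, i.e. $\{(AB)^{(1)}\}\supseteq\{B^{(1)}A^{(1)}-B^{(1)}P(QP)^{(1)}QA^{(1)}\}$.
   Context: For $X\in\mathbb{C}^{p\times q}$, a matrix $G\in\mathbb{C}^{q\times p}$ is called an $\{i,\ldots,j\}$-generalized inverse of $X$ (written $X^{(i,\ldots,j)}$) if it satisfies the equations numbered $i,\ldots,j$ among the four Penrose equations (i) $XGX=X$, (ii) $GXG=G$, (iii) $(XG)^*=XG$, (iv) $(GX)^*=GX$; $\{X^{(i,\ldots,j)}\}$ denotes the set of all such $G$. $I_n$ is the $n\times n$ identity matrix. *)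

theory Defs
  imports "HOL-Analysis.Analysis"
begin

definition g1_inverse :: "complex^'p^'q \<Rightarrow> complex^'q^'p \<Rightarrow> bool" where
  "g1_inverse G X \<longleftrightarrow> X ** G ** X = X"

end

theory Submission
  imports Defs
begin

text \<open>With \<open>P = I - A\<^sup>- A\<close> and \<open>Q = I - B B\<^sup>-\<close> one has \<open>A P = 0\<close> and \<open>Q B = 0\<close>,
  and sandwiching any \<open>B\<^sup>- X A\<^sup>-\<close> between two copies of \<open>A B\<close> gives \<open>A (I - Q) X (I - P) B\<close>.
  For \<open>X = I\<close> this is \<open>A B + A Q P B\<close>; for \<open>X = P G Q\<close> it is \<open>A (Q P) G (Q P) B = A Q P B\<close>,
  so the correction term exactly cancels the defect of \<open>B\<^sup>- A\<^sup>-\<close>.\<close>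

lemma matrix_diff_ldistrib: "(A::'a::comm_ring_1^'n^'m) ** (B - C) = A ** B - A ** C"
  by (vector matrix_matrix_mult_def sum_subtractf right_diff_distrib)

lemma matrix_diff_rdistrib: "((B::'a::comm_ring_1^'n^'m) - C) ** A = B ** A - C ** A"
  by (vector matrix_matrix_mult_def sum_subtractf left_diff_distrib)

lemma matrix_mul_neg_neg: "(- (A::'a::comm_ring_1^'n^'m)) ** B ** (- C) = A ** B ** C"
  by (vector matrix_matrix_mult_def sum_negf)

lemma matrix_mul_inner_inverse_complement_right:
  fixes A :: "'a::comm_ring_1^'n^'m"
  assumes "A ** A1 ** A = A"
  shows "A ** (mat 1 - A1 ** A) = 0"
  using assms by (simp add: matrix_diff_ldistrib matrix_mul_assoc)

lemma matrix_mul_inner_inverse_complement_left: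
  fixes B :: "'a::comm_ring_1^'p^'n"
  assumes "B ** B1 ** B = B"
  shows "(mat 1 - B ** B1) ** B = 0"
  using assms by (simp add: matrix_diff_rdistrib matrix_mul_assoc)

lemma inner_inverses_sandwich:
  fixes A :: "'a::comm_ring_1^'n^'m" and B :: "'a^'p^'n"
    and A1 :: "'a^'m^'n" and B1 :: "'a^'n^'p" and X :: "'a^'n^'n"
  shows "A ** B ** (B1 ** X ** A1) ** (A ** B)
           = (A - A ** (mat 1 - B ** B1)) ** X ** (B - (mat 1 - A1 ** A) ** B)"
proof -
  have "A ** B ** (B1 ** X ** A1) ** (A ** B) = (A ** (B ** B1)) ** X ** ((A1 ** A) ** B)"
    by (simp add: matrix_mul_assoc)
  then show ?thesis
    by (simp add: matrix_diff_ldistrib matrix_diff_rdistrib)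
qed

lemma product_sandwich_reverse_order_inverse:
  fixes A :: "'a::comm_ring_1^'n^'m" and B :: "'a^'p^'n"
    and A1 :: "'a^'m^'n" and B1 :: "'a^'n^'p"
  assumes A1: "A ** A1 ** A = A" and B1: "B ** B1 ** B = B"
  defines "P \<equiv> mat 1 - A1 ** A" and "Q \<equiv> mat 1 - B ** B1"
  shows "A ** B ** (B1 ** A1) ** (A ** B) = A ** B + A ** (Q ** P) ** B"
proof -
  have AP: "A ** P = 0" and QB: "Q ** B = 0"
    unfolding P_def Q_def
    using matrix_mul_inner_inverse_complement_right[OF A1]
      matrix_mul_inner_inverse_complement_left[OF B1] .
  have "A ** B ** (B1 ** A1) ** (A ** B) = A ** B ** (B1 ** mat 1 ** A1) ** (A ** B)"
    by simp
  also have "\<dots> = (A - A ** Q) ** (B - P ** B)"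
    unfolding P_def Q_def inner_inverses_sandwich by simp
  also have "\<dots> = A ** B - (A ** P) ** B - A ** (Q ** B) + A ** (Q ** P) ** B"
    by (simp add: matrix_diff_ldistrib matrix_diff_rdistrib matrix_mul_assoc)
  finally show ?thesis
    by (simp add: AP QB)
qed

lemma product_sandwich_correction_term:
  fixes A :: "'a::comm_ring_1^'n^'m" and B :: "'a^'p^'n"
    and A1 :: "'a^'m^'n" and B1 :: "'a^'n^'p" and G :: "'a^'n^'n"
  assumes A1: "A ** A1 ** A = A" and B1: "B ** B1 ** B = B"
  defines "P \<equiv> mat 1 - A1 ** A" and "Q \<equiv> mat 1 - B ** B1"
  shows "A ** B ** (B1 ** P ** G ** Q ** A1) ** (A ** B) = A ** (Q ** P ** G ** (Q ** P)) ** B"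
proof -
  have AP: "A ** P = 0" and QB: "Q ** B = 0"
    unfolding P_def Q_def
    using matrix_mul_inner_inverse_complement_right[OF A1]
      matrix_mul_inner_inverse_complement_left[OF B1] .
  have "A ** B ** (B1 ** P ** G ** Q ** A1) ** (A ** B)
          = A ** B ** (B1 ** (P ** G ** Q) ** A1) ** (A ** B)"
    by (simp add: matrix_mul_assoc)
  also have "\<dots> = (A - A ** Q) ** (P ** G ** Q) ** (B - P ** B)"
    unfolding P_def Q_def inner_inverses_sandwich ..
  also have "\<dots> = (A ** P - A ** Q ** P) ** G ** (Q ** B - Q ** P ** B)"
    by (simp add: matrix_diff_ldistrib matrix_diff_rdistrib matrix_mul_assoc)
  also have "\<dots> = (- (A ** Q ** P)) ** G ** (- (Q ** P ** B))"
    by (simp add: AP QB)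
  also have "\<dots> = A ** (Q ** P ** G ** (Q ** P)) ** B"
    unfolding matrix_mul_neg_neg by (simp add: matrix_mul_assoc)
  finally show ?thesis .
qed

theorem theorem3p2:
  fixes A :: "complex^'n^'m" and B :: "complex^'p^'n"
    and A1 :: "complex^'m^'n" and B1 :: "complex^'n^'p"
    and G :: "complex^'n^'n"
  assumes "g1_inverse A1 A" and "g1_inverse B1 B"
    and "g1_inverse G ((mat 1 - B ** B1) ** (mat 1 - A1 ** A))"
  shows "g1_inverse (B1 ** A1 - B1 ** (mat 1 - A1 ** A) ** G ** (mat 1 - B ** B1) ** A1) (A ** B)"
proof -
  let ?P = "mat 1 - A1 ** A" and ?Q = "mat 1 - B ** B1"
  have A1: "A ** A1 ** A = A" and B1: "B ** B1 ** B = B"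
    and G: "?Q ** ?P ** G ** (?Q ** ?P) = ?Q ** ?P"
    using assms unfolding g1_inverse_def .
  have "A ** B ** (B1 ** A1 - B1 ** ?P ** G ** ?Q ** A1) ** (A ** B)
          = A ** B ** (B1 ** A1) ** (A ** B) - A ** B ** (B1 ** ?P ** G ** ?Q ** A1) ** (A ** B)"
    by (simp add: matrix_diff_ldistrib matrix_diff_rdistrib)
  also have "\<dots> = A ** B + A ** (?Q ** ?P) ** B - A ** (?Q ** ?P ** G ** (?Q ** ?P)) ** B"
    unfolding product_sandwich_reverse_order_inverse[OF A1 B1]
      product_sandwich_correction_term[OF A1 B1] ..
  also have "\<dots> = A ** B"
    unfolding G by simp
  finally show ?thesis
    unfolding g1_inverse_def .
qed

end
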